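(* Let $w$ be any finite word in the letters $\tilde T,\tilde R$. Then $w(F_0)$, where $F_0=\sum_{j\ge0}UP[j,0]$, can be written in quiver form, i.e. there exist $m,n\ge0$, vectors $S,A\in\mathbb{Z}^{m+n}$, a symmetric matrix $Q\in\mathbb{Z}^{(m+n)\times(m+n)}$ and a type $X\in\{UP,OP,RI\}$ such that $$w(F_0)=\sum_{\mathbf d\in\mathbb{N}^{m+n}}(-q)^{S\cdot\mathbf d}a^{A\cdot\mathbf d}q^{\mathbf d^TQ\mathbf d}{|\mathbf d|\brack d_1,\dots,d_{m+n}}X[\,|\mathbf d|,\,d_1+\cdots+d_m\,].$$
   Context: Notation: $(x;q^2)_n=\prod_{i=0}^{n-1}(1-xq^{2i})$; ${N\brack b_1,\dots,b_m}=\frac{(q^2;q^2)_N}{\prod(q^2;q^2)_{b_i}}$ for $\sum b_i=N$; ${N\brack k}_+={N\brack k,N-k}$; $|\mathbf d|=d_1+\cdots+d_{m+n}$. Formal skein setup: symbols $X[j,k]$ for $X\in\{UP,OP,RI\}$ and integers $0\le k\le j$ are linearly independent; $\mathcal M$ is the set of formal sums $\sum_{j\ge0}\sum_X\sum_{k=0}^jc_{X,j,k}X[j,k]$ with coefficients in $\mathbb{Q}(a,q)$ (any expression as on the right-hand side above defines such an element by collecting terms, since for fixed $j$ there are finitely many $\mathbf d$ with $|\mathbf d|=j$). (They model the basis webs of the $j$-colored HOMFLY-PT skein module of 4-ended tangles with boundary orientation $X$.) Linear operators $T,R$ (top/right twist) are defined, for fixed $j$, by $T\,UP[j,k]=\sum_{h=k}^j(-q)^{h-j}q^{k^2}{h\brack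 k}_+UP[j,h]$; $R\,UP[j,k]=\sum_{h=0}^k(-q)^{h-j}a^{h-j}q^{-2kh+k^2+j^2}{j-h\brack k-h}_+OP[j,h]$; $T\,OP[j,k]=\sum_{h=k}^j(-q)^ha^kq^{k^2-2jk}{h\brack k}_+RI[j,h]$; $R\,OP[j,k]=\sum_{h=0}^k(-q)^{h-j}a^{k-j}q^{2h(j-k)+(k-j)^2}{j-h\brack k-h}_+UP[j,h]$; $T\,RI[j,k]=\sum_{h=k}^j(-q)^ha^hq^{k^2-2jh}{h\brack k}_+OP[j,h]$; $R\,RI[j,k]=\sum_{h=0}^k(-q)^hq^{h(2j-2k)+k^2-j^2}{j-h\brack k-h}_+RI[j,h]$, extended termwise. Rescaling $\rho(X[j,k])={j\brack k}_+X[j,k]$; rescaled twists $\tilde T=\rho T\rho^{-1}$, $\tilde R=\rho R\rho^{-1}$. The indices $d_1,\dots,d_m$ are called active and $d_{m+1},\dots,d_{m+n}$ inactive. *)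

theory Defs
  imports Main "HOL-Computational_Algebra.Polynomial" "HOL-Computational_Algebra.Fraction_Field"
begin

text \<open>The coefficient field Q(a,q): fractions of bivariate rational polynomials.
  The outer polynomial variable is a, the inner one is q.\<close>
type_synonym Qaq = "rat poly poly fract"

definition av :: Qaq where "av = Fract [:0, 1:] 1"
definition qv :: Qaq where "qv = Fract [:[:0, 1:]:] 1"

definition qpoch :: "Qaq \<Rightarrow> nat \<Rightarrow> Qaq" where
  "qpoch x n = (\<Prod>i<n. 1 - x * qv ^ (2 * i))"

definition qbin :: "nat \<Rightarrow> nat \<Rightarrow> Qaq" where
  "qbin N k = qpoch (qv ^ 2) N / (qpoch (qv ^ 2) k * qpoch (qv ^ 2) (N - k))"

datatype orient = UP | OP | RI

text \<open>Formal sums: c X j k is the coefficient of X[j,k] (meaningful for k \<le> j).\<close>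
type_synonym skein = "orient \<Rightarrow> nat \<Rightarrow> nat \<Rightarrow> Qaq"

abbreviation zi :: "nat \<Rightarrow> int" where "zi \<equiv> int"

text \<open>Top twist T, written coefficientwise on the target X[j,h].\<close>
definition Ttw :: "skein \<Rightarrow> skein" where
  "Ttw c X j h = (if h \<le> j then (case X of
      UP \<Rightarrow> (\<Sum>k\<in>{0..h}. c UP j k * (- qv) powi (zi h - zi j) * qv powi (zi k ^ 2) * qbin h k)
    | RI \<Rightarrow> (\<Sum>k\<in>{0..h}. c OP j k * (- qv) powi (zi h) * av powi (zi k)
                * qv powi (zi k ^ 2 - 2 * zi j * zi k) * qbin h k)
    | OP \<Rightarrow> (\<Sum>k\<in>{0..h}. c RI j k * (- qv) powi (zi h) * av powi (zi h)
                * qv powi (zi k ^ 2 - 2 * zi j * zi h) * qbin h k))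
    else 0)"

text \<open>Right twist R, written coefficientwise on the target X[j,h].\<close>
definition Rtw :: "skein \<Rightarrow> skein" where
  "Rtw c X j h = (if h \<le> j then (case X of
      OP \<Rightarrow> (\<Sum>k\<in>{h..j}. c UP j k * (- qv) powi (zi h - zi j) * av powi (zi h - zi j)
                * qv powi (- 2 * zi k * zi h + zi k ^ 2 + zi j ^ 2) * qbin (j - h) (k - h))
    | UP \<Rightarrow> (\<Sum>k\<in>{h..j}. c OP j k * (- qv) powi (zi h - zi j) * av powi (zi k - zi j)
                * qv powi (2 * zi h * (zi j - zi k) + (zi k - zi j) ^ 2) * qbin (j - h) (k - h))
    | RI \<Rightarrow> (\<Sum>k\<in>{h..j}. c RI j k * (- qv) powi (zi h)
                * qv powi (zi h * (2 * zi j - 2 * zi k) + zi k ^ 2 - zi j ^ 2) * qbin (j - h) (k - h)))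
    else 0)"

definition rho :: "skein \<Rightarrow> skein" where
  "rho c X j k = qbin j k * c X j k"
definition rho_inv :: "skein \<Rightarrow> skein" where
  "rho_inv c X j k = c X j k / qbin j k"

definition Tt :: "skein \<Rightarrow> skein" where "Tt = rho \<circ> Ttw \<circ> rho_inv"
definition Rt :: "skein \<Rightarrow> skein" where "Rt = rho \<circ> Rtw \<circ> rho_inv"

datatype letter = LT | LR

definition letter_op :: "letter \<Rightarrow> skein \<Rightarrow> skein" where
  "letter_op l = (case l of LT \<Rightarrow> Tt | LR \<Rightarrow> Rt)"

definition word_op :: "letter list \<Rightarrow> skein \<Rightarrow> skein" where
  "word_op w F = foldr letter_op w F"

definition F0 :: skein where
  "F0 X j k = (if X = UP \<and> k = 0 then 1 else 0)"

text \<open>Quiver form: coefficient of X'[j,k] is the sum over d in N^(m+n), |d| = j,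
  d_1+...+d_m = k (and X' = X). Vectors indexed by 0..m+n-1, extended by 0.\<close>
definition quiver_form :: "nat \<Rightarrow> nat \<Rightarrow> (nat \<Rightarrow> int) \<Rightarrow> (nat \<Rightarrow> int) \<Rightarrow> (nat \<Rightarrow> nat \<Rightarrow> int)
    \<Rightarrow> orient \<Rightarrow> skein" where
  "quiver_form m n S A Q X X' j k =
     (if X' = X then
       (\<Sum>d\<in>{d. (\<forall>i\<ge>m+n. d i = 0) \<and> (\<Sum>i<m+n. d i) = j \<and> (\<Sum>i<m. d i) = k}.
          (- qv) powi (\<Sum>i<m+n. S i * zi (d i))
        * av powi (\<Sum>i<m+n. A i * zi (d i))
        * qv powi (\<Sum>i<m+n. \<Sum>i'<m+n. zi (d i) * Q i i' * zi (d i'))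
        * (qpoch (qv ^ 2) j / (\<Prod>i<m+n. qpoch (qv ^ 2) (d i))))
     else 0)"

end

theory Submission
  imports Defs
begin

text \<open>In a quiver-form sum, the coefficient of \<open>X[j, h]\<close> after a rescaled twist is a sum over
  \<open>d\<close> of the old summand, an explicit twist factor in \<open>(k, j, h)\<close> with \<open>k\<close> the active sum, and a
  q-binomial: \<open>[j - k, h - k]\<close> for \<open>T\<close> and \<open>[k, h]\<close> for \<open>R\<close>. Expanding that q-binomial by the
  q-multinomial Vandermonde identity splits every inactive node (for \<open>T\<close>) or active node (for \<open>R\<close>)
  into a part that becomes or stays active and a new inactive node. On the refined quiver the twist
  factor, the Vandermonde inversions and the old exponents are again a linear form and a symmetric
  quadratic form, so twists preserve quiver form; \<open>F\<^sub>0\<close> is the quiver with one inactive node.\<close>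

abbreviation q2 :: Qaq where "q2 \<equiv> qv ^ 2"

abbreviation qfact :: "nat \<Rightarrow> Qaq" where "qfact n \<equiv> qpoch q2 n"

lemma Fract_power: "Fract (x::'a::idom) 1 ^ n = Fract (x ^ n) 1"
  by (induction n) (simp_all add: One_fract_def)

lemma qv_nonzero: "qv \<noteq> 0"
  unfolding qv_def by (simp add: Zero_fract_def eq_fract)

lemma av_nonzero: "av \<noteq> 0"
  unfolding av_def by (simp add: Zero_fract_def eq_fract)

lemma qv_power_neq_one:
  assumes "n > 0"
  shows "qv ^ n \<noteq> 1"
proof
  assume "qv ^ n = 1"
  then have "[:[:0, 1:] ^ n:] = (1 :: rat poly poly)"
    unfolding qv_def Fract_power by (simp add: One_fract_def eq_fract pCons_one poly_const_pow)
  then have "[:0, 1:] ^ n = (1 :: rat poly)"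
    by (metis one_poly_eq_simps(1) pCons_eq_iff)
  then have "degree ([:0, 1:] ^ n :: rat poly) = 0" by simp
  with assms show False by (simp add: degree_power_eq)
qed

lemma q2_power_neq_one: "n > 0 \<Longrightarrow> q2 ^ n \<noteq> 1"
  using qv_power_neq_one[of "2 * n"] by (simp add: power_mult)

lemma qfact_Suc: "qfact (Suc n) = qfact n * (1 - q2 ^ Suc n)"
  unfolding qpoch_def by (simp add: power_mult)

lemma qfact_nonzero: "qfact n \<noteq> 0"
proof (induction n)
  case (Suc n)
  then show ?case using q2_power_neq_one[of "Suc n"] by (simp add: qfact_Suc)
qed (simp add: qpoch_def)

text \<open>The q-binomial coefficient extended by zero beyond its range, so that Pascal's rule
  and the Vandermonde convolution hold without side conditions.\<close>
definition qbinom :: "nat \<Rightarrow> nat \<Rightarrow> Qaq" where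
  "qbinom n k = (if k \<le> n then qbin n k else 0)"

lemma qbin_0_right [simp]: "qbin n 0 = 1"
  unfolding qbin_def using qfact_nonzero[of n] by (simp add: qpoch_def)

lemma qbin_diag [simp]: "qbin n n = 1"
  unfolding qbin_def using qfact_nonzero[of n] by (simp add: qpoch_def)

lemma qbinom_0_right [simp]: "qbinom n 0 = 1"
  by (simp add: qbinom_def)

lemma qbinom_nonzero: "k \<le> n \<Longrightarrow> qbinom n k \<noteq> 0"
  unfolding qbinom_def qbin_def using qfact_nonzero by simp

lemma qbinom_qfact: "k \<le> n \<Longrightarrow> qfact k * qfact (n - k) * qbinom n k = qfact n"
  unfolding qbinom_def qbin_def using qfact_nonzero[of k] qfact_nonzero[of "n - k"] by simp

lemma qbinom_Suc_Suc: "qbinom (Suc n) (Suc k) = qbinom n (Suc k) + q2 ^ (n - k) * qbinom n k"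
proof (cases "k < n")
  case True
  then obtain r where n: "n = k + Suc r" by (metis add_Suc_right less_imp_Suc_add)
  define u where "u = q2 ^ Suc k"
  define v where "v = q2 ^ Suc r"
  have u: "1 - u \<noteq> 0" and v: "1 - v \<noteq> 0"
    unfolding u_def v_def using q2_power_neq_one[of "Suc k"] q2_power_neq_one[of "Suc r"]
    by (simp_all del: power_Suc)
  have uv: "q2 ^ Suc n = v * u"
  proof -
    have "Suc n = Suc r + Suc k" using n by simp
    then show ?thesis unfolding u_def v_def by (simp only: power_add)
  qed
  have "Suc n - Suc k = Suc r" using n by simp
  then have "qbinom (Suc n) (Suc k) = qfact n * (1 - q2 ^ Suc n) / (qfact (Suc k) * qfact (Suc r))"
    using True by (simp only: qbinom_def qbin_def qfact_Suc[of n] Suc_le_mono less_imp_le if_True)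
  also have "\<dots> = qfact n * (1 - v * u) / (qfact k * (1 - u) * (qfact r * (1 - v)))"
    by (simp only: qfact_Suc uv u_def v_def)
  also have "\<dots> = qfact n / (qfact k * (1 - u) * qfact r) + v * (qfact n / (qfact k * (qfact r * (1 - v))))"
    using u v qfact_nonzero[of k] qfact_nonzero[of r] by (simp add: divide_simps) (simp add: algebra_simps)
  also have "\<dots> = qbinom n (Suc k) + q2 ^ (n - k) * qbinom n k"
    using n by (simp add: qbinom_def qbin_def qfact_Suc u_def v_def)
  finally show ?thesis .
qed (auto simp: qbinom_def)

lemma vandermonde_exponent_shift:
  assumes "a \<le> x" "a \<le> H" "H - a \<le> y"
  shows "x + y - H + (x - a) * (H - a) = y - (H - a) + (x - a) * (Suc H - a :: nat)"
proof -
  obtain b c where "x = a + b" "H = a + c" "c \<le> y"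
    using assms by (metis le_add_diff_inverse)
  then show ?thesis by (simp add: algebra_simps)
qed

lemma qbinom_vandermonde:
  "qbinom (x + y) H = (\<Sum>a\<le>H. qbinom x a * qbinom y (H - a) * q2 ^ ((x - a) * (H - a)))"
proof (induction y arbitrary: H)
  case 0
  have "(\<Sum>a\<le>H. qbinom x a * qbinom 0 (H - a) * q2 ^ ((x - a) * (H - a)))
      = (\<Sum>a\<in>{H}. qbinom x a * qbinom 0 (H - a) * q2 ^ ((x - a) * (H - a)))"
    by (rule sum.mono_neutral_right) (auto simp: qbinom_def)
  then show ?case by simp
next
  case (Suc y)
  show ?case
  proof (cases H)
    case (Suc H')
    let ?t = "\<lambda>a. qbinom x a * qbinom y (H' - a) * q2 ^ (y - (H' - a)) * q2 ^ ((x - a) * (Suc H' - a))"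
    have shifted: "q2 ^ (x + y - H') * qbinom (x + y) H' = (\<Sum>a\<le>H'. ?t a)"
      unfolding Suc.IH[of H'] sum_distrib_left
    proof (rule sum.cong[OF refl])
      fix a assume a: "a \<in> {..H'}"
      show "q2 ^ (x + y - H') * (qbinom x a * qbinom y (H' - a) * q2 ^ ((x - a) * (H' - a))) = ?t a"
      proof (cases "a \<le> x \<and> H' - a \<le> y")
        case True
        then have "q2 ^ (x + y - H') * q2 ^ ((x - a) * (H' - a)) = q2 ^ (y - (H' - a)) * q2 ^ ((x - a) * (Suc H' - a))"
          using a vandermonde_exponent_shift[of a x H' y] by (simp flip: power_add)
        then show ?thesis by (simp add: algebra_simps)
      qed (auto simp: qbinom_def)
    qed
    have "qbinom (x + Suc y) H = qbinom (x + y) (Suc H') + q2 ^ (x + y - H') * qbinom (x + y) H'"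
      using qbinom_Suc_Suc[of "x + y" H'] Suc by simp
    also have "\<dots> = (\<Sum>a\<le>Suc H'. qbinom x a * qbinom y (Suc H' - a) * q2 ^ ((x - a) * (Suc H' - a)))
        + (\<Sum>a\<le>Suc H'. if a \<le> H' then ?t a else 0)"
      using Suc.IH[of "Suc H'"] shifted by simp
    also have "\<dots> = (\<Sum>a\<le>Suc H'. qbinom x a * qbinom (Suc y) (Suc H' - a) * q2 ^ ((x - a) * (Suc H' - a)))"
      unfolding sum.distrib[symmetric]
    proof (rule sum.cong[OF refl])
      fix a assume a: "a \<in> {..Suc H'}"
      show "qbinom x a * qbinom y (Suc H' - a) * q2 ^ ((x - a) * (Suc H' - a)) + (if a \<le> H' then ?t a else 0)
          = qbinom x a * qbinom (Suc y) (Suc H' - a) * q2 ^ ((x - a) * (Suc H' - a))"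
      proof (cases "a \<le> H'")
        case True
        then have "Suc H' - a = Suc (H' - a)" by auto
        then show ?thesis using True qbinom_Suc_Suc[of y "H' - a"] by (simp add: algebra_simps)
      qed (use a in auto)
    qed
    finally show ?thesis using Suc by simp
  qed simp
qed

definition splits :: "nat \<Rightarrow> nat \<Rightarrow> (nat \<Rightarrow> nat) \<Rightarrow> (nat \<Rightarrow> nat) set" where
  "splits s p d = {a. (\<forall>i. (i < s \<or> s + p \<le> i) \<longrightarrow> a i = 0) \<and> (\<forall>i. s \<le> i \<and> i < s + p \<longrightarrow> a i \<le> d i)}"

definition splits_with_sum :: "nat \<Rightarrow> nat \<Rightarrow> (nat \<Rightarrow> nat) \<Rightarrow> nat \<Rightarrow> (nat \<Rightarrow> nat) set" where
  "splits_with_sum s p d H = {a \<in> splits s p d. (\<Sum>i\<in>{s..<s+p}. a i) = H}"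

definition split_inversions :: "nat \<Rightarrow> nat \<Rightarrow> (nat \<Rightarrow> nat) \<Rightarrow> (nat \<Rightarrow> nat) \<Rightarrow> nat" where
  "split_inversions s p d a = (\<Sum>i\<in>{s..<s+p}. \<Sum>l\<in>{s..<s+p}. if i < l then (d i - a i) * a l else 0)"

lemma finite_splits_with_sum: "finite (splits_with_sum s p d H)"
proof (rule finite_subset)
  show "splits_with_sum s p d H
      \<subseteq> {a. \<forall>x. (x \<in> {s..<s+p} \<longrightarrow> a x \<in> {..H}) \<and> (x \<notin> {s..<s+p} \<longrightarrow> a x = 0)}"
  proof
    fix a assume a: "a \<in> splits_with_sum s p d H"
    have "a x \<le> H" if "x \<in> {s..<s+p}" for x
      using member_le_sum[of x "{s..<s+p}" a] that a by (simp add: splits_with_sum_def)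
    with a show "a \<in> {a. \<forall>x. (x \<in> {s..<s+p} \<longrightarrow> a x \<in> {..H}) \<and> (x \<notin> {s..<s+p} \<longrightarrow> a x = 0)}"
      by (auto simp: splits_with_sum_def splits_def)
  qed
qed (rule finite_set_of_finite_funs; simp)

lemma splits_with_sum_Suc:
  "splits_with_sum s (Suc p) d H
    = (\<lambda>(x, a). a(s + p := x)) ` (SIGMA x:{x. x \<le> H \<and> x \<le> d (s + p)}. splits_with_sum s p d (H - x))"
proof (intro equalityI subsetI)
  fix a' assume a': "a' \<in> splits_with_sum s (Suc p) d H"
  let ?x = "a' (s + p)" and ?a = "a'(s + p := 0)"
  have "(\<Sum>i\<in>{s..<s+p}. ?a i) = (\<Sum>i\<in>{s..<s+p}. a' i)" by (rule sum.cong) auto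
  moreover have "(\<Sum>i\<in>{s..<s+Suc p}. a' i) = (\<Sum>i\<in>{s..<s+p}. a' i) + ?x" by simp
  ultimately have "?x \<le> H \<and> ?x \<le> d (s + p) \<and> ?a \<in> splits_with_sum s p d (H - ?x)"
    using a' by (auto simp: splits_with_sum_def splits_def)
  then show "a' \<in> (\<lambda>(x, a). a(s + p := x)) ` (SIGMA x:{x. x \<le> H \<and> x \<le> d (s + p)}. splits_with_sum s p d (H - x))"
    by (intro image_eqI[of _ _ "(?x, ?a)"]) auto
next
  fix a' assume "a' \<in> (\<lambda>(x, a). a(s + p := x)) ` (SIGMA x:{x. x \<le> H \<and> x \<le> d (s + p)}. splits_with_sum s p d (H - x))"
  then obtain x a where xa: "x \<le> H" "x \<le> d (s + p)" "a \<in> splits_with_sum s p d (H - x)"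
    and a': "a' = a(s + p := x)" by auto
  have "(\<Sum>i\<in>{s..<s+p}. a' i) = (\<Sum>i\<in>{s..<s+p}. a i)" unfolding a' by (rule sum.cong) auto
  moreover have "(\<Sum>i\<in>{s..<s+Suc p}. a' i) = (\<Sum>i\<in>{s..<s+p}. a' i) + x" using a' by simp
  ultimately show "a' \<in> splits_with_sum s (Suc p) d H"
    using xa a' by (auto simp: splits_with_sum_def splits_def)
qed

lemma inj_on_split_extend:
  "inj_on (\<lambda>(x, a). a(s + p := x)) (SIGMA x:X. splits_with_sum s p d (H x))"
proof (rule inj_onI, clarify)
  fix x a y b
  assume "a \<in> splits_with_sum s p d (H x)" "b \<in> splits_with_sum s p d (H y)"
    and e: "a(s + p := x) = b(s + p := y)"
  then have "a (s + p) = b (s + p)" by (simp add: splits_with_sum_def splits_def)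
  with e have "a = b" by (metis fun_upd_triv fun_upd_upd)
  with fun_cong[OF e, of "s + p"] show "x = y \<and> a = b" by simp
qed

lemma split_inversions_extend:
  assumes "a \<in> splits_with_sum s p d (H - x)"
  shows "split_inversions s (Suc p) d (a(s + p := x))
      = split_inversions s p d a + ((\<Sum>i\<in>{s..<s+p}. d i) - (H - x)) * x"
proof -
  let ?g = "\<lambda>a i l. if i < l then (d i - a i) * a l else (0::nat)"
  let ?a' = "a(s + p := x)"
  have le: "\<And>i. i \<in> {s..<s+p} \<Longrightarrow> a i \<le> d i"
    using assms by (simp add: splits_with_sum_def splits_def)
  have "split_inversions s (Suc p) d ?a'
      = (\<Sum>i\<in>{s..<s+p}. (\<Sum>l\<in>{s..<s+p}. ?g ?a' i l) + ?g ?a' i (s + p)) + (\<Sum>l\<in>{s..<s+Suc p}. ?g ?a' (s + p) l)"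
    by (simp add: split_inversions_def)
  also have "(\<Sum>l\<in>{s..<s+Suc p}. ?g ?a' (s + p) l) = 0" by (intro sum.neutral) auto
  also have "(\<Sum>i\<in>{s..<s+p}. (\<Sum>l\<in>{s..<s+p}. ?g ?a' i l) + ?g ?a' i (s + p))
      = (\<Sum>i\<in>{s..<s+p}. (\<Sum>l\<in>{s..<s+p}. ?g a i l) + (d i - a i) * x)"
    by (intro sum.cong refl arg_cong2[where f = "(+)"]) auto
  also have "\<dots> = split_inversions s p d a + (\<Sum>i\<in>{s..<s+p}. d i - a i) * x"
    by (simp add: split_inversions_def sum.distrib sum_distrib_right)
  also have "(\<Sum>i\<in>{s..<s+p}. d i - a i) = (\<Sum>i\<in>{s..<s+p}. d i) - (H - x)"
    using sum_subtractf_nat[of "{s..<s+p}" a d, OF le] assms by (simp add: splits_with_sum_def)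
  finally show ?thesis by (simp only: add_0_right)
qed

lemma qbinom_sum_vandermonde:
  "qbinom (\<Sum>i\<in>{s..<s+p}. d i) H
    = (\<Sum>a\<in>splits_with_sum s p d H. (\<Prod>i\<in>{s..<s+p}. qbinom (d i) (a i)) * q2 ^ split_inversions s p d a)"
proof (induction p arbitrary: H)
  case 0
  have "splits_with_sum s 0 d H = (if H = 0 then {\<lambda>_. 0} else {})"
    by (auto simp: splits_with_sum_def splits_def fun_eq_iff) (metis not_less)
  then show ?case by (simp add: qbinom_def split_inversions_def)
next
  case (Suc p)
  let ?l = "s + p"
  let ?E = "\<Sum>i\<in>{s..<s+p}. d i"
  let ?F = "\<lambda>p a. (\<Prod>i\<in>{s..<s+p}. qbinom (d i) (a i)) * q2 ^ split_inversions s p d a"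
  have extend: "?F (Suc p) (a(?l := x)) = qbinom (d ?l) x * q2 ^ ((?E - (H - x)) * x) * ?F p a"
    if a: "a \<in> splits_with_sum s p d (H - x)" for a x
  proof -
    have "(\<Prod>i\<in>{s..<s+p}. qbinom (d i) ((a(?l := x)) i)) = (\<Prod>i\<in>{s..<s+p}. qbinom (d i) (a i))"
      by (rule prod.cong) auto
    then show ?thesis unfolding split_inversions_extend[OF a] by (simp add: power_add ac_simps)
  qed
  have "(\<Sum>a'\<in>splits_with_sum s (Suc p) d H. ?F (Suc p) a')
      = (\<Sum>(x, a)\<in>(SIGMA x:{x. x \<le> H \<and> x \<le> d ?l}. splits_with_sum s p d (H - x)). ?F (Suc p) (a(?l := x)))"
    unfolding splits_with_sum_Suc by (subst sum.reindex[OF inj_on_split_extend]) (simp add: case_prod_unfold)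
  also have "\<dots> = (\<Sum>x | x \<le> H \<and> x \<le> d ?l. \<Sum>a\<in>splits_with_sum s p d (H - x). ?F (Suc p) (a(?l := x)))"
    by (rule sum.Sigma[symmetric]) (auto simp: finite_splits_with_sum)
  also have "\<dots> = (\<Sum>x | x \<le> H \<and> x \<le> d ?l. qbinom (d ?l) x * q2 ^ ((?E - (H - x)) * x) * qbinom ?E (H - x))"
  proof (rule sum.cong[OF refl])
    fix x
    have "(\<Sum>a\<in>splits_with_sum s p d (H - x). ?F (Suc p) (a(?l := x)))
        = qbinom (d ?l) x * q2 ^ ((?E - (H - x)) * x) * (\<Sum>a\<in>splits_with_sum s p d (H - x). ?F p a)"
      unfolding sum_distrib_left by (rule sum.cong[OF refl]) (erule extend)
    then show "(\<Sum>a\<in>splits_with_sum s p d (H - x). ?F (Suc p) (a(?l := x)))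
        = qbinom (d ?l) x * q2 ^ ((?E - (H - x)) * x) * qbinom ?E (H - x)"
      by (simp only: Suc.IH)
  qed
  also have "\<dots> = (\<Sum>x\<le>H. qbinom (d ?l) x * q2 ^ ((?E - (H - x)) * x) * qbinom ?E (H - x))"
    by (rule sum.mono_neutral_left) (auto simp: qbinom_def)
  also have "\<dots> = (\<Sum>a\<le>H. qbinom ?E a * qbinom (d ?l) (H - a) * q2 ^ ((?E - a) * (H - a)))"
    by (rule sum.reindex_bij_witness[where i = "\<lambda>x. H - x" and j = "\<lambda>x. H - x"]) (auto simp: ac_simps)
  also have "\<dots> = qbinom (?E + d ?l) H" by (rule qbinom_vandermonde[symmetric])
  finally show ?case by simp
qed

lemma sum_atLeastLessThan_add_shift:
  fixes g :: "nat \<Rightarrow> 'a::comm_monoid_add"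
  shows "(\<Sum>i\<in>{s..<s+p}. g i) = (\<Sum>r<p. g (s + r))"
  using sum.shift_bounds_nat_ivl[of g 0 s p] by (simp add: atLeast0LessThan add.commute)

lemma prod_atLeastLessThan_add_shift:
  fixes g :: "nat \<Rightarrow> 'a::comm_monoid_mult"
  shows "(\<Prod>i\<in>{s..<s+p}. g i) = (\<Prod>r<p. g (s + r))"
  using prod.shift_bounds_nat_ivl[of g 0 s p] by (simp add: atLeast0LessThan add.commute)

lemma sum_lessThan_add_split:
  fixes g :: "nat \<Rightarrow> 'a::comm_monoid_add"
  shows "(\<Sum>i<N+p. g i) = (\<Sum>i<N. g i) + (\<Sum>r<p. g (N + r))"
  using sum.atLeastLessThan_concat[of 0 N "N+p" g] by (simp add: atLeast0LessThan sum_atLeastLessThan_add_shift)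

lemma prod_lessThan_add_split:
  fixes g :: "nat \<Rightarrow> 'a::comm_monoid_mult"
  shows "(\<Prod>i<N+p. g i) = (\<Prod>i<N. g i) * (\<Prod>r<p. g (N + r))"
  using prod.atLeastLessThan_concat[of 0 N "N+p" g] by (simp add: atLeast0LessThan prod_atLeastLessThan_add_shift)

lemma sum_lessThan_split_block:
  fixes g :: "nat \<Rightarrow> 'a::comm_monoid_add"
  assumes "s + p \<le> N"
  shows "(\<Sum>i<N. g i) = (\<Sum>i<s. g i) + (\<Sum>r<p. g (s + r)) + (\<Sum>i\<in>{s+p..<N}. g i)"
  using sum.atLeastLessThan_concat[of 0 "s+p" N g] sum.atLeastLessThan_concat[of 0 s "s+p" g] assms
  by (simp add: atLeast0LessThan sum_atLeastLessThan_add_shift)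

lemma prod_lessThan_split_block:
  fixes g :: "nat \<Rightarrow> 'a::comm_monoid_mult"
  assumes "s + p \<le> N"
  shows "(\<Prod>i<N. g i) = (\<Prod>i<s. g i) * (\<Prod>r<p. g (s + r)) * (\<Prod>i\<in>{s+p..<N}. g i)"
  using prod.atLeastLessThan_concat[of 0 "s+p" N g] prod.atLeastLessThan_concat[of 0 s "s+p" g] assms
  by (simp add: atLeast0LessThan prod_atLeastLessThan_add_shift)

text \<open>Refining the nodes \<open>s..<s+p\<close> of a quiver with \<open>N\<close> nodes: node \<open>s+r\<close> keeps the part \<open>a (s+r)\<close>
  of \<open>d (s+r)\<close>, and a new node \<open>N+r\<close> receives the rest; \<open>refine_parent\<close> maps every node of the
  refined quiver to the node it comes from.\<close>
definition refine :: "nat \<Rightarrow> nat \<Rightarrow> nat \<Rightarrow> (nat \<Rightarrow> nat) \<Rightarrow> (nat \<Rightarrow> nat) \<Rightarrow> nat \<Rightarrow> nat" where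
  "refine N s p d a = (\<lambda>i. if i < N then (if s \<le> i \<and> i < s + p then a i else d i)
     else if i < N + p then d (s + (i - N)) - a (s + (i - N)) else 0)"

definition refine_parent :: "nat \<Rightarrow> nat \<Rightarrow> nat \<Rightarrow> nat" where
  "refine_parent N s i = (if i < N then i else s + (i - N))"

lemma refine_below: "i < s \<Longrightarrow> s + p \<le> N \<Longrightarrow> refine N s p d a i = d i"
  by (simp add: refine_def)

lemma refine_block: "r < p \<Longrightarrow> s + p \<le> N \<Longrightarrow> refine N s p d a (s + r) = a (s + r)"
  by (simp add: refine_def)

lemma refine_above: "s + p \<le> i \<Longrightarrow> i < N \<Longrightarrow> refine N s p d a i = d i"
  by (simp add: refine_def)

lemma refine_new: "r < p \<Longrightarrow> refine N s p d a (N + r) = d (s + r) - a (s + r)"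
  by (simp add: refine_def)

lemma refine_beyond: "N + p \<le> i \<Longrightarrow> refine N s p d a i = 0"
  by (simp add: refine_def)

lemma refine_parent_less: "s + p \<le> N \<Longrightarrow> i < N + p \<Longrightarrow> refine_parent N s i < N"
  by (auto simp: refine_parent_def)

lemma sum_parent_refine:
  fixes f :: "nat \<Rightarrow> 'a::comm_ring_1"
  assumes block: "s + p \<le> N" and a: "a \<in> splits s p d"
  shows "(\<Sum>i<N+p. f (refine_parent N s i) * of_nat (refine N s p d a i)) = (\<Sum>i<N. f i * of_nat (d i))"
proof -
  have le: "\<And>r. r < p \<Longrightarrow> a (s + r) \<le> d (s + r)" using a by (simp add: splits_def)
  have "(\<Sum>i<N+p. f (refine_parent N s i) * of_nat (refine N s p d a i))
      = (\<Sum>i<s. f i * of_nat (d i)) + (\<Sum>r<p. f (s + r) * of_nat (a (s + r))) + (\<Sum>i\<in>{s+p..<N}. f i * of_nat (d i))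
        + (\<Sum>r<p. f (s + r) * of_nat (d (s + r) - a (s + r)))"
    by (simp add: sum_lessThan_add_split sum_lessThan_split_block[OF block] refine_parent_def
        refine_below refine_block refine_above refine_new block)
  also have "(\<Sum>r<p. f (s + r) * of_nat (d (s + r) - a (s + r)))
      = (\<Sum>r<p. f (s + r) * of_nat (d (s + r))) - (\<Sum>r<p. f (s + r) * of_nat (a (s + r)))"
    by (simp add: le of_nat_diff sum_subtractf right_diff_distrib)
  finally show ?thesis by (simp add: sum_lessThan_split_block[OF block])
qed

lemma sum_refine:
  assumes "s + p \<le> N" and "a \<in> splits s p d"
  shows "(\<Sum>i<N+p. refine N s p d a i) = (\<Sum>i<N. d i)"
  using sum_parent_refine[OF assms, where f = "\<lambda>_. 1 :: int"] by (simp flip: of_nat_sum)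

lemma sum_refine_prefix:
  assumes "s + p \<le> N"
  shows "(\<Sum>i<s+p. refine N s p d a i) = (\<Sum>i<s. d i) + (\<Sum>i\<in>{s..<s+p}. a i)"
  using sum_lessThan_split_block[of s p "s+p" "refine N s p d a"] assms
  by (simp add: refine_below refine_block sum_atLeastLessThan_add_shift)

lemma prod_qfact_refine:
  assumes block: "s + p \<le> N" and a: "a \<in> splits s p d"
  shows "(\<Prod>i<N+p. qfact (refine N s p d a i)) * (\<Prod>i\<in>{s..<s+p}. qbinom (d i) (a i)) = (\<Prod>i<N. qfact (d i))"
proof -
  have le: "\<And>r. r < p \<Longrightarrow> a (s + r) \<le> d (s + r)" using a by (simp add: splits_def)
  have "(\<Prod>i<N+p. qfact (refine N s p d a i)) = (\<Prod>i<s. qfact (d i)) * (\<Prod>r<p. qfact (a (s + r)))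
      * (\<Prod>i\<in>{s+p..<N}. qfact (d i)) * (\<Prod>r<p. qfact (d (s + r) - a (s + r)))"
    by (simp add: prod_lessThan_add_split prod_lessThan_split_block[OF block]
        refine_below refine_block refine_above refine_new block)
  then have "(\<Prod>i<N+p. qfact (refine N s p d a i)) * (\<Prod>i\<in>{s..<s+p}. qbinom (d i) (a i))
      = (\<Prod>i<s. qfact (d i)) * (\<Prod>i\<in>{s+p..<N}. qfact (d i))
        * (\<Prod>r<p. qfact (a (s + r)) * qfact (d (s + r) - a (s + r)) * qbinom (d (s + r)) (a (s + r)))"
    unfolding prod_atLeastLessThan_add_shift prod.distrib by (simp only: ac_simps)
  also have "(\<Prod>r<p. qfact (a (s + r)) * qfact (d (s + r) - a (s + r)) * qbinom (d (s + r)) (a (s + r)))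
      = (\<Prod>r<p. qfact (d (s + r)))"
    by (rule prod.cong[OF refl]) (simp add: qbinom_qfact le)
  finally show ?thesis by (simp add: prod_lessThan_split_block[OF block] ac_simps)
qed

lemma refine_inj:
  assumes block: "s + p \<le> N" and "\<forall>i\<ge>N. d i = 0" "\<forall>i\<ge>N. d' i = 0"
    and "a \<in> splits s p d" "a' \<in> splits s p d'"
    and eq: "refine N s p d a = refine N s p d' a'"
  shows "d = d' \<and> a = a'"
proof -
  have "a i = a' i" for i
    using fun_cong[OF eq, of i] assms(4,5) block by (auto simp: splits_def refine_def split: if_splits)
  then have a_eq: "a = a'" by blast
  have "d i = d' i" for i
  proof (cases "s \<le> i \<and> i < s + p")
    case True
    then obtain r where r: "i = s + r" "r < p" by (metis add_less_cancel_left le_add_diff_inverse)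
    have "d i - a i = d' i - a' i"
      using fun_cong[OF eq, of "N + r"] r by (simp add: refine_new)
    moreover have "a i \<le> d i" "a' i \<le> d' i" using assms(4,5) True by (auto simp: splits_def)
    ultimately show ?thesis using a_eq by simp
  next
    case False
    then show ?thesis
      using fun_cong[OF eq, of i] assms(2,3) by (cases "i < N") (auto simp: refine_def)
  qed
  with a_eq show ?thesis by blast
qed

lemma qfact_quotient_refine:
  assumes block: "s + p \<le> N" and a: "a \<in> splits s p d"
  shows "x / (\<Prod>i<N+p. qfact (refine N s p d a i)) = x / (\<Prod>i<N. qfact (d i)) * (\<Prod>i\<in>{s..<s+p}. qbinom (d i) (a i))"
proof -
  have "(\<Prod>i\<in>{s..<s+p}. qbinom (d i) (a i)) \<noteq> 0"
    using a by (auto simp: splits_def qbinom_nonzero)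
  then show ?thesis by (simp flip: prod_qfact_refine[OF block a])
qed

definition compositions :: "nat \<Rightarrow> nat \<Rightarrow> (nat \<Rightarrow> nat) set" where
  "compositions N j = {d. (\<forall>i\<ge>N. d i = 0) \<and> (\<Sum>i<N. d i) = j}"

definition compositions_prefix :: "nat \<Rightarrow> nat \<Rightarrow> nat \<Rightarrow> nat \<Rightarrow> (nat \<Rightarrow> nat) set" where
  "compositions_prefix N m j k = {d \<in> compositions N j. (\<Sum>i<m. d i) = k}"

lemma finite_compositions: "finite (compositions N j)"
proof (rule finite_subset)
  show "compositions N j \<subseteq> {d. \<forall>x. (x \<in> {..<N} \<longrightarrow> d x \<in> {..j}) \<and> (x \<notin> {..<N} \<longrightarrow> d x = 0)}"
  proof
    fix d assume d: "d \<in> compositions N j"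
    have "d x \<le> j" if "x \<in> {..<N}" for x
      using member_le_sum[of x "{..<N}" d] that d by (simp add: compositions_def)
    with d show "d \<in> {d. \<forall>x. (x \<in> {..<N} \<longrightarrow> d x \<in> {..j}) \<and> (x \<notin> {..<N} \<longrightarrow> d x = 0)}"
      by (auto simp: compositions_def)
  qed
qed (rule finite_set_of_finite_funs; simp)

lemma compositions_prefix_refine:
  assumes block: "s + p \<le> N"
  shows "compositions_prefix (N+p) (s+p) j h = (\<lambda>(d, a). refine N s p d a) `
      (SIGMA d:{d \<in> compositions N j. (\<Sum>i<s. d i) \<le> h}. splits_with_sum s p d (h - (\<Sum>i<s. d i)))"
proof (intro equalityI subsetI)
  fix d' assume d': "d' \<in> compositions_prefix (N+p) (s+p) j h"
  define d where "d = (\<lambda>i. if i < N then d' i + (if s \<le> i \<and> i < s + p then d' (N + (i - s)) else 0) else 0)"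
  define a where "a = (\<lambda>i. if s \<le> i \<and> i < s + p then d' i else 0)"
  have a: "a \<in> splits s p d" using block by (auto simp: splits_def a_def d_def)
  have d'_eq: "refine N s p d a = d'"
  proof
    fix i
    show "refine N s p d a i = d' i"
      using d' block by (cases "i < N"; cases "i < N + p")
        (auto simp: refine_def d_def a_def compositions_prefix_def compositions_def)
  qed
  have "(\<Sum>i<N. d i) = j" "(\<Sum>i<s. d i) + (\<Sum>i\<in>{s..<s+p}. a i) = h"
    using sum_refine[OF block a] sum_refine_prefix[OF block, of d a] d' d'_eq
    by (simp_all add: compositions_prefix_def compositions_def)
  then have "(d, a) \<in> (SIGMA d:{d \<in> compositions N j. (\<Sum>i<s. d i) \<le> h}. splits_with_sum s p d (h - (\<Sum>i<s. d i)))"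
    using a by (auto simp: compositions_def splits_with_sum_def d_def)
  with d'_eq show "d' \<in> (\<lambda>(d, a). refine N s p d a) `
      (SIGMA d:{d \<in> compositions N j. (\<Sum>i<s. d i) \<le> h}. splits_with_sum s p d (h - (\<Sum>i<s. d i)))"
    by (intro image_eqI[of _ _ "(d, a)"]) auto
next
  fix d' assume "d' \<in> (\<lambda>(d, a). refine N s p d a) `
      (SIGMA d:{d \<in> compositions N j. (\<Sum>i<s. d i) \<le> h}. splits_with_sum s p d (h - (\<Sum>i<s. d i)))"
  then obtain d a where d: "d \<in> compositions N j" "(\<Sum>i<s. d i) \<le> h"
    and a: "a \<in> splits_with_sum s p d (h - (\<Sum>i<s. d i))" and d'_eq: "d' = refine N s p d a"
    by auto
  have "a \<in> splits s p d" using a by (simp add: splits_with_sum_def)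
  then show "d' \<in> compositions_prefix (N+p) (s+p) j h"
    using sum_refine[OF block] sum_refine_prefix[OF block, of d a] d a d'_eq refine_beyond
    by (auto simp: compositions_prefix_def compositions_def splits_with_sum_def)
qed

definition quiver_sum :: "nat \<Rightarrow> nat \<Rightarrow> ((nat \<Rightarrow> nat) \<Rightarrow> Qaq) \<Rightarrow> nat \<Rightarrow> nat \<Rightarrow> Qaq" where
  "quiver_sum N m W j k = (\<Sum>d\<in>compositions_prefix N m j k. W d * (qfact j / (\<Prod>i<N. qfact (d i))))"

definition lin_form :: "nat \<Rightarrow> (nat \<Rightarrow> int) \<Rightarrow> (nat \<Rightarrow> nat) \<Rightarrow> int" where
  "lin_form N u d = (\<Sum>i<N. u i * int (d i))"

definition quad_form :: "nat \<Rightarrow> (nat \<Rightarrow> nat \<Rightarrow> int) \<Rightarrow> (nat \<Rightarrow> nat) \<Rightarrow> int" where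
  "quad_form N Q d = (\<Sum>i<N. \<Sum>i'<N. int (d i) * Q i i' * int (d i'))"

definition quiver_weight :: "nat \<Rightarrow> (nat \<Rightarrow> int) \<Rightarrow> (nat \<Rightarrow> int) \<Rightarrow> (nat \<Rightarrow> nat \<Rightarrow> int) \<Rightarrow> (nat \<Rightarrow> nat) \<Rightarrow> Qaq" where
  "quiver_weight N S A Q d = (- qv) powi lin_form N S d * av powi lin_form N A d * qv powi quad_form N Q d"

lemma quiver_form_eq_quiver_sum:
  "quiver_form m n S A Q X X' j k = (if X' = X then quiver_sum (m+n) m (quiver_weight (m+n) S A Q) j k else 0)"
  by (simp add: quiver_form_def quiver_sum_def compositions_prefix_def compositions_def quiver_weight_def
      lin_form_def quad_form_def conj_assoc)

text \<open>For each old vector \<open>d\<close>, the sum over its refinements collapses to a single q-binomial by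
  the q-multinomial Vandermonde identity.\<close>
lemma quiver_sum_refine:
  assumes block: "s + p \<le> N"
    and weight: "\<And>d a. \<forall>i\<ge>N. d i = 0 \<Longrightarrow> a \<in> splits s p d \<Longrightarrow>
       W' (refine N s p d a) = W d * G d ((\<Sum>i<s. d i) + (\<Sum>i\<in>{s..<s+p}. a i)) * q2 ^ split_inversions s p d a"
  shows "quiver_sum (N+p) (s+p) W' j h = (\<Sum>d\<in>compositions N j. if (\<Sum>i<s. d i) \<le> h then
      W d * (qfact j / (\<Prod>i<N. qfact (d i))) * G d h * qbinom (\<Sum>i\<in>{s..<s+p}. d i) (h - (\<Sum>i<s. d i)) else 0)"
proof -
  let ?D = "{d \<in> compositions N j. (\<Sum>i<s. d i) \<le> h}"
  let ?A = "\<lambda>d. splits_with_sum s p d (h - (\<Sum>i<s. d i))"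
  let ?c = "\<lambda>d. W d * (qfact j / (\<Prod>i<N. qfact (d i))) * G d h"
  let ?t = "\<lambda>d a. W' (refine N s p d a) * (qfact j / (\<Prod>i<N+p. qfact (refine N s p d a i)))"
  have inj: "inj_on (\<lambda>(d, a). refine N s p d a) (Sigma ?D ?A)"
    using refine_inj[OF block] by (intro inj_onI) (auto simp: compositions_def splits_with_sum_def)
  have summand: "?t d a = ?c d * ((\<Prod>i\<in>{s..<s+p}. qbinom (d i) (a i)) * q2 ^ split_inversions s p d a)"
    if d: "d \<in> ?D" and a: "a \<in> ?A d" for d a
  proof -
    have a': "a \<in> splits s p d" using a by (simp add: splits_with_sum_def)
    have "(\<Sum>i<s. d i) + (\<Sum>i\<in>{s..<s+p}. a i) = h"
      using a d by (simp add: splits_with_sum_def)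
    then show ?thesis
      using weight[OF _ a'] d by (simp add: qfact_quotient_refine[OF block a'] compositions_def ac_simps)
  qed
  have "quiver_sum (N+p) (s+p) W' j h = (\<Sum>(d, a)\<in>Sigma ?D ?A. ?t d a)"
    unfolding quiver_sum_def compositions_prefix_refine[OF block]
    by (subst sum.reindex[OF inj]) (simp add: case_prod_unfold)
  also have "\<dots> = (\<Sum>d\<in>?D. \<Sum>a\<in>?A d. ?t d a)"
    by (rule sum.Sigma[symmetric]) (auto simp: finite_splits_with_sum finite_compositions)
  also have "\<dots> = (\<Sum>d\<in>?D. ?c d * qbinom (\<Sum>i\<in>{s..<s+p}. d i) (h - (\<Sum>i<s. d i)))"
  proof (rule sum.cong[OF refl])
    fix d assume d: "d \<in> ?D"
    have "(\<Sum>a\<in>?A d. ?t d a)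
        = ?c d * (\<Sum>a\<in>?A d. (\<Prod>i\<in>{s..<s+p}. qbinom (d i) (a i)) * q2 ^ split_inversions s p d a)"
      unfolding sum_distrib_left by (rule sum.cong[OF refl]) (rule summand[OF d])
    then show "(\<Sum>a\<in>?A d. ?t d a) = ?c d * qbinom (\<Sum>i\<in>{s..<s+p}. d i) (h - (\<Sum>i<s. d i))"
      by (simp only: qbinom_sum_vandermonde)
  qed
  also have "\<dots> = (\<Sum>d\<in>compositions N j. if (\<Sum>i<s. d i) \<le> h
      then ?c d * qbinom (\<Sum>i\<in>{s..<s+p}. d i) (h - (\<Sum>i<s. d i)) else 0)"
    by (rule sum.inter_filter[OF finite_compositions])
  finally show ?thesis .
qed

lemma lin_form_refine:
  assumes "s + p \<le> N" and "a \<in> splits s p d"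
  shows "lin_form (N+p) (\<lambda>i. u (refine_parent N s i)) (refine N s p d a) = lin_form N u d"
  unfolding lin_form_def by (rule sum_parent_refine[OF assms])

lemma quad_form_refine:
  assumes block: "s + p \<le> N" and a: "a \<in> splits s p d"
  shows "quad_form (N+p) (\<lambda>i i'. Q (refine_parent N s i) (refine_parent N s i')) (refine N s p d a) = quad_form N Q d"
proof -
  let ?e = "refine N s p d a"
  have "quad_form (N+p) (\<lambda>i i'. Q (refine_parent N s i) (refine_parent N s i')) ?e
      = (\<Sum>i<N+p. (\<Sum>i'<N+p. Q (refine_parent N s i) (refine_parent N s i') * int (?e i')) * int (?e i))"
    by (simp add: quad_form_def sum_distrib_left sum_distrib_right ac_simps)
  also have "\<dots> = (\<Sum>i<N+p. (\<Sum>k'<N. Q (refine_parent N s i) k' * int (d k')) * int (?e i))"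
    by (simp only: sum_parent_refine[OF block a])
  also have "\<dots> = (\<Sum>k<N. (\<Sum>k'<N. Q k k' * int (d k')) * int (d k))"
    by (rule sum_parent_refine[OF block a, of "\<lambda>k. \<Sum>k'<N. Q k k' * int (d k')"])
  also have "\<dots> = quad_form N Q d"
    by (simp add: quad_form_def sum_distrib_left sum_distrib_right ac_simps)
  finally show ?thesis .
qed

lemma lin_form_add: "lin_form N (\<lambda>i. u i + v i) d = lin_form N u d + lin_form N v d"
  by (simp add: lin_form_def sum.distrib algebra_simps)

lemma quad_form_add: "quad_form N (\<lambda>i i'. Q i i' + Q' i i') d = quad_form N Q d + quad_form N Q' d"
  by (simp add: quad_form_def sum.distrib algebra_simps)

lemma quad_form_transpose: "quad_form N (\<lambda>i i'. Q i' i) d = quad_form N Q d"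
  unfolding quad_form_def by (subst sum.swap) (simp add: ac_simps)

lemma lin_form_sum: "lin_form N (\<lambda>i. \<Sum>x<M. c x * U x i) d = (\<Sum>x<M. c x * lin_form N (U x) d)"
  unfolding lin_form_def sum_distrib_right sum_distrib_left
  by (subst sum.swap) (simp add: ac_simps)

lemma quad_form_sum:
  "quad_form N (\<lambda>i i'. \<Sum>x<M. \<Sum>y<M. c x y * U x i * U y i') d
    = (\<Sum>x<M. \<Sum>y<M. lin_form N (U x) d * c x y * lin_form N (U y) d)"
proof -
  have "quad_form N (\<lambda>i i'. \<Sum>x<M. \<Sum>y<M. c x y * U x i * U y i') d
      = (\<Sum>i<N. \<Sum>i'<N. \<Sum>x<M. \<Sum>y<M. c x y * (U x i * int (d i)) * (U y i' * int (d i')))"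
    by (simp add: quad_form_def sum_distrib_left sum_distrib_right ac_simps)
  also have "\<dots> = (\<Sum>i<N. \<Sum>x<M. \<Sum>i'<N. \<Sum>y<M. c x y * (U x i * int (d i)) * (U y i' * int (d i')))"
    by (intro sum.cong refl) (rule sum.swap)
  also have "\<dots> = (\<Sum>x<M. \<Sum>i<N. \<Sum>i'<N. \<Sum>y<M. c x y * (U x i * int (d i)) * (U y i' * int (d i')))"
    by (rule sum.swap)
  also have "\<dots> = (\<Sum>x<M. \<Sum>i<N. \<Sum>y<M. \<Sum>i'<N. c x y * (U x i * int (d i)) * (U y i' * int (d i')))"
    by (intro sum.cong refl) (rule sum.swap)
  also have "\<dots> = (\<Sum>x<M. \<Sum>y<M. \<Sum>i<N. \<Sum>i'<N. c x y * (U x i * int (d i)) * (U y i' * int (d i')))"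
    by (intro sum.cong refl) (rule sum.swap)
  also have "\<dots> = (\<Sum>x<M. \<Sum>y<M. lin_form N (U x) d * c x y * lin_form N (U y) d)"
    by (simp add: lin_form_def sum_distrib_left sum_distrib_right ac_simps)
  finally show ?thesis .
qed

text \<open>The split inversions as a quadratic form: the matrix pairs the new node \<open>N+r\<close> with the
  block node \<open>s+r'\<close> for \<open>r < r'\<close>, symmetrised (hence the factor 2 below).\<close>
definition inversion_pairs :: "nat \<Rightarrow> nat \<Rightarrow> nat \<Rightarrow> nat \<Rightarrow> nat \<Rightarrow> int" where
  "inversion_pairs N s p i i' = of_bool (N \<le> i \<and> i < N + p \<and> s \<le> i' \<and> i' < s + p \<and> s + (i - N) < i')"

definition inversion_matrix :: "nat \<Rightarrow> nat \<Rightarrow> nat \<Rightarrow> nat \<Rightarrow> nat \<Rightarrow> int" where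
  "inversion_matrix N s p i i' = inversion_pairs N s p i i' + inversion_pairs N s p i' i"

lemma quad_form_inversion_pairs:
  assumes block: "s + p \<le> N"
  shows "quad_form (N+p) (inversion_pairs N s p) (refine N s p d a) = int (split_inversions s p d a)"
proof -
  let ?e = "refine N s p d a"
  let ?row = "\<lambda>r. \<Sum>i'<N+p. int (?e (N + r)) * inversion_pairs N s p (N + r) i' * int (?e i')"
  have "quad_form (N+p) (inversion_pairs N s p) ?e
      = (\<Sum>i<N. \<Sum>i'<N+p. int (?e i) * inversion_pairs N s p i i' * int (?e i')) + (\<Sum>r<p. ?row r)"
    unfolding quad_form_def by (rule sum_lessThan_add_split)
  also have "(\<Sum>i<N. \<Sum>i'<N+p. int (?e i) * inversion_pairs N s p i i' * int (?e i')) = 0"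
    by (intro sum.neutral ballI) (simp add: inversion_pairs_def)
  also have "?row r = (\<Sum>r'<p. if r < r' then int ((d (s + r) - a (s + r)) * a (s + r')) else 0)"
    if "r < p" for r
  proof -
    have "?row r = (\<Sum>r'<p. int (?e (N + r)) * inversion_pairs N s p (N + r) (s + r') * int (?e (s + r')))"
      using block by (simp add: sum_lessThan_split_block[of s p "N+p"] inversion_pairs_def)
    then show ?thesis
      using that block by (auto simp: inversion_pairs_def refine_new refine_block intro!: sum.cong)
  qed
  then have "(\<Sum>r<p. ?row r) = (\<Sum>r<p. \<Sum>r'<p. if r < r' then int ((d (s + r) - a (s + r)) * a (s + r')) else 0)"
    by simp
  also have "\<dots> = int (split_inversions s p d a)"
    unfolding split_inversions_def sum_atLeastLessThan_add_shift of_nat_sum by (intro sum.cong refl) simp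
  finally show ?thesis by simp
qed

lemma quad_form_inversion_matrix:
  assumes "s + p \<le> N"
  shows "quad_form (N+p) (inversion_matrix N s p) (refine N s p d a) = 2 * int (split_inversions s p d a)"
proof -
  have "quad_form (N+p) (inversion_matrix N s p) (refine N s p d a)
      = quad_form (N+p) (inversion_pairs N s p) (refine N s p d a)
        + quad_form (N+p) (\<lambda>i i'. inversion_pairs N s p i' i) (refine N s p d a)"
    unfolding inversion_matrix_def by (rule quad_form_add)
  then show ?thesis
    using quad_form_transpose[of "N+p" "inversion_pairs N s p"] quad_form_inversion_pairs[OF assms] by simp
qed

definition vec3 :: "int \<Rightarrow> int \<Rightarrow> int \<Rightarrow> nat \<Rightarrow> int" where
  "vec3 k j h x = (if x = 0 then k else if x = 1 then j else h)"

text \<open>The old active sum \<open>k\<close>, the total \<open>j\<close> and the new active sum \<open>h\<close> (the first \<open>s+p\<close> nodes)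
  as linear forms on the refined quiver.\<close>
definition refined_stat :: "nat \<Rightarrow> nat \<Rightarrow> nat \<Rightarrow> nat \<Rightarrow> nat \<Rightarrow> nat \<Rightarrow> int" where
  "refined_stat N s p m x i = vec3 (of_bool (refine_parent N s i < m)) 1 (of_bool (i < s + p)) x"

definition refined_lin :: "nat \<Rightarrow> nat \<Rightarrow> nat \<Rightarrow> nat \<Rightarrow> (nat \<Rightarrow> int) \<Rightarrow> (nat \<Rightarrow> int) \<Rightarrow> nat \<Rightarrow> int" where
  "refined_lin N s p m u c i = u (refine_parent N s i) + (\<Sum>x<3. c x * refined_stat N s p m x i)"

definition refined_quad :: "nat \<Rightarrow> nat \<Rightarrow> nat \<Rightarrow> nat \<Rightarrow> (nat \<Rightarrow> nat \<Rightarrow> int) \<Rightarrow> (nat \<Rightarrow> nat \<Rightarrow> int) \<Rightarrow> nat \<Rightarrow> nat \<Rightarrow> int" where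
  "refined_quad N s p m Q C i i' = Q (refine_parent N s i) (refine_parent N s i')
     + (\<Sum>x<3. \<Sum>y<3. C x y * refined_stat N s p m x i * refined_stat N s p m y i')
     + inversion_matrix N s p i i'"

definition stat_weight :: "(nat \<Rightarrow> int) \<Rightarrow> (nat \<Rightarrow> int) \<Rightarrow> (nat \<Rightarrow> nat \<Rightarrow> int) \<Rightarrow> (nat \<Rightarrow> int) \<Rightarrow> Qaq" where
  "stat_weight cs ca C v = (- qv) powi (\<Sum>x<3. cs x * v x) * av powi (\<Sum>x<3. ca x * v x)
     * qv powi (\<Sum>x<3. \<Sum>y<3. v x * C x y * v y)"

lemma lin_form_refined_stat:
  assumes block: "s + p \<le> N" and "m \<le> N" and a: "a \<in> splits s p d"
  shows "lin_form (N+p) (refined_stat N s p m x) (refine N s p d a)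
    = vec3 (int (\<Sum>i<m. d i)) (int (\<Sum>i<N. d i)) (int ((\<Sum>i<s. d i) + (\<Sum>i\<in>{s..<s+p}. a i))) x"
proof -
  have "lin_form (N+p) (\<lambda>i. of_bool (refine_parent N s i < m)) (refine N s p d a) = int (\<Sum>i<m. d i)"
  proof -
    have "lin_form N (\<lambda>i. of_bool (i < m)) d = (\<Sum>i<N. if i < m then int (d i) else 0)"
      unfolding lin_form_def by (intro sum.cong) auto
    also have "\<dots> = (\<Sum>i\<in>{..<N} \<inter> {..<m}. int (d i))"
      by (simp add: sum.inter_restrict lessThan_def)
    also have "{..<N} \<inter> {..<m} = {..<m}" using assms(2) by auto
    finally show ?thesis using lin_form_refine[OF block a, of "\<lambda>i. of_bool (i < m)"] by simp
  qed
  moreover have "lin_form (N+p) (\<lambda>_. 1) (refine N s p d a) = int (\<Sum>i<N. d i)"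
    using lin_form_refine[OF block a, of "\<lambda>_. 1"] by (simp add: lin_form_def)
  moreover have "lin_form (N+p) (\<lambda>i. of_bool (i < s + p)) (refine N s p d a)
      = int ((\<Sum>i<s. d i) + (\<Sum>i\<in>{s..<s+p}. a i))"
  proof -
    have "lin_form (N+p) (\<lambda>i. of_bool (i < s + p)) (refine N s p d a)
        = (\<Sum>i<N+p. if i < s + p then int (refine N s p d a i) else 0)"
      unfolding lin_form_def by (intro sum.cong) auto
    also have "\<dots> = (\<Sum>i\<in>{..<N+p} \<inter> {..<s+p}. int (refine N s p d a i))"
      by (simp add: sum.inter_restrict lessThan_def)
    also have "{..<N+p} \<inter> {..<s+p} = {..<s+p}" using block by auto
    finally show ?thesis by (simp add: sum_refine_prefix[OF block] flip: of_nat_sum)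
  qed
  ultimately show ?thesis
    by (cases "x = 0"; cases "x = 1") (simp_all add: refined_stat_def[abs_def] vec3_def)
qed

abbreviation sym_matrix :: "nat \<Rightarrow> (nat \<Rightarrow> nat \<Rightarrow> int) \<Rightarrow> bool" where
  "sym_matrix N Q \<equiv> \<forall>i<N. \<forall>i'<N. Q i i' = Q i' i"

lemma refined_quad_sym:
  assumes "sym_matrix N Q" and "\<forall>x y. C x y = C y x" and block: "s + p \<le> N"
    and "i < N + p" "i' < N + p"
  shows "refined_quad N s p m Q C i i' = refined_quad N s p m Q C i' i"
proof -
  have "(\<Sum>x<3. \<Sum>y<3. C x y * refined_stat N s p m x i * refined_stat N s p m y i')
      = (\<Sum>y<3. \<Sum>x<3. C y x * refined_stat N s p m y i' * refined_stat N s p m x i)"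
    using assms(2) by (subst sum.swap) (simp add: ac_simps)
  then show ?thesis
    using assms(1) refine_parent_less[OF block assms(4)] refine_parent_less[OF block assms(5)]
    by (simp add: refined_quad_def inversion_matrix_def)
qed

lemma quiver_sum_refined:
  assumes block: "s + p \<le> N" and "m \<le> N"
  shows "quiver_sum (N+p) (s+p) (quiver_weight (N+p) (refined_lin N s p m S cs) (refined_lin N s p m A ca)
      (refined_quad N s p m Q C)) j h
    = (\<Sum>d\<in>compositions N j. if (\<Sum>i<s. d i) \<le> h then
        quiver_weight N S A Q d * (qfact j / (\<Prod>i<N. qfact (d i)))
          * stat_weight cs ca C (vec3 (int (\<Sum>i<m. d i)) (int (\<Sum>i<N. d i)) (int h))
          * qbinom (\<Sum>i\<in>{s..<s+p}. d i) (h - (\<Sum>i<s. d i)) else 0)"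
proof (rule quiver_sum_refine[OF block])
  fix d a assume a: "a \<in> splits s p d"
  let ?e = "refine N s p d a"
  let ?v = "vec3 (int (\<Sum>i<m. d i)) (int (\<Sum>i<N. d i)) (int ((\<Sum>i<s. d i) + (\<Sum>i\<in>{s..<s+p}. a i)))"
  have stat: "lin_form (N+p) (refined_stat N s p m x) ?e = ?v x" for x
    by (rule lin_form_refined_stat[OF block assms(2) a])
  have lin: "lin_form (N+p) (refined_lin N s p m u c) ?e = lin_form N u d + (\<Sum>x<3. c x * ?v x)" for u c
    unfolding refined_lin_def lin_form_add lin_form_refine[OF block a] lin_form_sum stat ..
  have quad: "quad_form (N+p) (refined_quad N s p m Q C) ?e
      = quad_form N Q d + (\<Sum>x<3. \<Sum>y<3. ?v x * C x y * ?v y) + 2 * int (split_inversions s p d a)"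
    unfolding refined_quad_def quad_form_add quad_form_refine[OF block a] quad_form_sum stat
      quad_form_inversion_matrix[OF block] ..
  have q2_power: "q2 ^ split_inversions s p d a = qv powi (2 * int (split_inversions s p d a))"
    by (metis power_mult power_int_of_nat of_nat_mult of_nat_numeral)
  show "quiver_weight (N+p) (refined_lin N s p m S cs) (refined_lin N s p m A ca) (refined_quad N s p m Q C) ?e
      = quiver_weight N S A Q d * stat_weight cs ca C ?v * q2 ^ split_inversions s p d a"
    unfolding quiver_weight_def lin quad stat_weight_def q2_power
    using qv_nonzero av_nonzero by (simp add: power_int_add ac_simps)
qed

lemma qbin_mult_qbin_upper:
  assumes "k \<le> h" "h \<le> j"
  shows "qbin j h * qbin h k / qbin j k = qbinom (j - k) (h - k)"
proof -
  have "j - k - (h - k) = j - h" using assms by simp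
  then show ?thesis
    using assms qfact_nonzero[of j] qfact_nonzero[of h] qfact_nonzero[of k] qfact_nonzero[of "j - h"]
      qfact_nonzero[of "h - k"] qfact_nonzero[of "j - k"]
    by (simp add: qbinom_def qbin_def field_simps)
qed

lemma qbin_mult_qbin_lower:
  assumes "h \<le> k" "k \<le> j"
  shows "qbin j h * qbin (j - h) (k - h) / qbin j k = qbinom k h"
proof -
  have "j - h - (k - h) = j - k" using assms by simp
  then show ?thesis
    using assms qfact_nonzero[of j] qfact_nonzero[of h] qfact_nonzero[of k] qfact_nonzero[of "j - h"]
      qfact_nonzero[of "k - h"] qfact_nonzero[of "j - k"]
    by (simp add: qbinom_def qbin_def field_simps)
qed

lemma sum_compositions_by_prefix:
  assumes "m \<le> N"
  shows "(\<Sum>d\<in>compositions N j. f (\<Sum>i<m. d i) d) = (\<Sum>k\<in>{0..j}. \<Sum>d\<in>compositions_prefix N m j k. f k d)"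
proof -
  have "(\<Sum>i<m. d i) \<le> j" if "d \<in> compositions N j" for d
    using that sum_mono2[of "{..<N}" "{..<m}" d] assms by (auto simp: compositions_def)
  then have "(\<Sum>d\<in>compositions N j. f (\<Sum>i<m. d i) d)
      = (\<Sum>k\<in>{0..j}. \<Sum>d\<in>{d \<in> compositions N j. (\<Sum>i<m. d i) = k}. f (\<Sum>i<m. d i) d)"
    by (intro sum.group[symmetric]) (auto simp: finite_compositions)
  then show ?thesis
    unfolding compositions_prefix_def by (auto intro!: sum.cong)
qed

lemma top_twist_sum:
  assumes c: "\<And>k. c k = quiver_sum (m+n) m W j k"
  shows "qbin j h * (if h \<le> j then (\<Sum>k\<in>{0..h}. (c k / qbin j k) * g k * qbin h k) else 0)
    = (\<Sum>d\<in>compositions (m+n) j. if (\<Sum>i<m. d i) \<le> h then W d * (qfact j / (\<Prod>i<m+n. qfact (d i)))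
        * g (\<Sum>i<m. d i) * qbinom (\<Sum>i\<in>{m..<m+n}. d i) (h - (\<Sum>i<m. d i)) else 0)"
proof -
  let ?t = "\<lambda>k d. if k \<le> h then W d * (qfact j / (\<Prod>i<m+n. qfact (d i))) * g k * qbinom (j - k) (h - k) else 0"
  have block: "(\<Sum>i\<in>{m..<m+n}. d i) = j - (\<Sum>i<m. d i)" if "d \<in> compositions (m+n) j" for d
    using that sum.atLeastLessThan_concat[of 0 m "m+n" d] by (simp add: compositions_def atLeast0LessThan)
  have "(\<Sum>d\<in>compositions (m+n) j. if (\<Sum>i<m. d i) \<le> h then W d * (qfact j / (\<Prod>i<m+n. qfact (d i)))
        * g (\<Sum>i<m. d i) * qbinom (\<Sum>i\<in>{m..<m+n}. d i) (h - (\<Sum>i<m. d i)) else 0)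
      = (\<Sum>d\<in>compositions (m+n) j. ?t (\<Sum>i<m. d i) d)"
    by (intro sum.cong refl) (simp add: block)
  also have "\<dots> = (\<Sum>k\<in>{0..j}. \<Sum>d\<in>compositions_prefix (m+n) m j k. ?t k d)"
    by (rule sum_compositions_by_prefix) simp
  moreover have "qbin j h * ((c k / qbin j k) * g k * qbin h k) = (\<Sum>d\<in>compositions_prefix (m+n) m j k. ?t k d)"
    if "k \<le> h" "h \<le> j" for k
  proof -
    have "qbin j h * ((c k / qbin j k) * g k * qbin h k) = c k * g k * (qbin j h * qbin h k / qbin j k)"
      by (simp add: field_simps)
    also have "\<dots> = c k * g k * qbinom (j - k) (h - k)"
      using that by (simp only: qbin_mult_qbin_upper)
    also have "\<dots> = (\<Sum>d\<in>compositions_prefix (m+n) m j k. ?t k d)"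
      unfolding c quiver_sum_def sum_distrib_right using that by (simp only: ac_simps if_True)
    finally show ?thesis .
  qed
  moreover have "(\<Sum>k\<in>{0..j}. \<Sum>d\<in>compositions_prefix (m+n) m j k. ?t k d)
      = (\<Sum>k\<in>{0..h}. \<Sum>d\<in>compositions_prefix (m+n) m j k. ?t k d)" if "h \<le> j"
    by (rule sum.mono_neutral_right) (use that in auto)
  moreover have "(\<Sum>k\<in>{0..j}. \<Sum>d\<in>compositions_prefix (m+n) m j k. ?t k d) = 0" if "\<not> h \<le> j"
    by (intro sum.neutral ballI) (use that in \<open>auto simp: qbinom_def\<close>)
  ultimately show ?thesis by (auto simp: sum_distrib_left)
qed

lemma right_twist_sum:
  assumes c: "\<And>k. c k = quiver_sum (m+n) m W j k"
  shows "qbin j h * (if h \<le> j then (\<Sum>k\<in>{h..j}. (c k / qbin j k) * g k * qbin (j - h) (k - h)) else 0)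
    = (\<Sum>d\<in>compositions (m+n) j. W d * (qfact j / (\<Prod>i<m+n. qfact (d i))) * g (\<Sum>i<m. d i)
        * qbinom (\<Sum>i<m. d i) h)"
proof -
  let ?t = "\<lambda>k d. W d * (qfact j / (\<Prod>i<m+n. qfact (d i))) * g k * qbinom k h"
  have "(\<Sum>d\<in>compositions (m+n) j. ?t (\<Sum>i<m. d i) d)
      = (\<Sum>k\<in>{0..j}. \<Sum>d\<in>compositions_prefix (m+n) m j k. ?t k d)"
    by (rule sum_compositions_by_prefix) simp
  moreover have "qbin j h * ((c k / qbin j k) * g k * qbin (j - h) (k - h))
      = (\<Sum>d\<in>compositions_prefix (m+n) m j k. ?t k d)" if "h \<le> k" "k \<le> j" for k
  proof -
    have "qbin j h * ((c k / qbin j k) * g k * qbin (j - h) (k - h)) = c k * g k * (qbin j h * qbin (j - h) (k - h) / qbin j k)"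
      by (simp add: field_simps)
    also have "\<dots> = c k * g k * qbinom k h"
      using that by (simp only: qbin_mult_qbin_lower)
    also have "\<dots> = (\<Sum>d\<in>compositions_prefix (m+n) m j k. ?t k d)"
      unfolding c quiver_sum_def sum_distrib_right using that by (simp only: ac_simps if_True)
    finally show ?thesis .
  qed
  moreover have "(\<Sum>k\<in>{0..j}. \<Sum>d\<in>compositions_prefix (m+n) m j k. ?t k d)
      = (\<Sum>k\<in>{h..j}. \<Sum>d\<in>compositions_prefix (m+n) m j k. ?t k d)"
    by (rule sum.mono_neutral_right) (auto simp: qbinom_def)
  moreover have "(\<Sum>k\<in>{0..j}. \<Sum>d\<in>compositions_prefix (m+n) m j k. ?t k d) = 0" if "\<not> h \<le> j"
    by (intro sum.neutral ballI) (use that in \<open>auto simp: qbinom_def\<close>)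
  ultimately show ?thesis by (auto simp: sum_distrib_left)
qed

definition sym3 :: "int \<Rightarrow> int \<Rightarrow> int \<Rightarrow> int \<Rightarrow> int \<Rightarrow> int \<Rightarrow> nat \<Rightarrow> nat \<Rightarrow> int" where
  "sym3 kk jj hh kj kh jh x y = (if x = 0 \<and> y = 0 then kk else if x = 1 \<and> y = 1 then jj
     else if x \<ge> 2 \<and> y \<ge> 2 then hh else if (x = 0 \<and> y = 1) \<or> (x = 1 \<and> y = 0) then kj
     else if (x = 0 \<and> y \<ge> 2) \<or> (x \<ge> 2 \<and> y = 0) then kh else jh)"

lemma sym3_sym: "\<forall>x y. sym3 kk jj hh kj kh jh x y = sym3 kk jj hh kj kh jh y x"
  by (auto simp: sym3_def)

lemma stat_weight_vec3_sym3:
  "stat_weight (vec3 s1 s2 s3) (vec3 a1 a2 a3) (sym3 kk jj hh kj kh jh) (vec3 k j h)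
    = (- qv) powi (s1 * k + s2 * j + s3 * h) * av powi (a1 * k + a2 * j + a3 * h)
      * qv powi (kk * k^2 + jj * j^2 + hh * h^2 + 2 * kj * k * j + 2 * kh * k * h + 2 * jh * j * h)"
proof -
  have sum3: "(\<Sum>x<(3::nat). f x) = f 0 + f 1 + (f 2 :: int)" for f
    by (simp add: eval_nat_numeral)
  show ?thesis
    by (simp add: stat_weight_def sum3 vec3_def sym3_def power2_eq_square algebra_simps)
qed

text \<open>\<open>T\<close> turns the inactive nodes into active ones, each split off from a new inactive copy.\<close>
lemma top_twist_quiver_form:
  assumes "sym_matrix (m+n) Q" and "\<forall>x y. C x y = C y x"
    and target: "\<And>j h. F Y j h = qbin j h * (if h \<le> j then
        (\<Sum>k\<in>{0..h}. (quiver_form m n S A Q X X j k / qbin j k) * g j k h * qbin h k) else 0)"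
    and other: "\<And>X' j h. X' \<noteq> Y \<Longrightarrow> F X' j h = 0"
    and g: "\<And>j k h. stat_weight cs ca C (vec3 (int k) (int j) (int h)) = g j k h"
  shows "\<exists>S' A' Q'. sym_matrix ((m+n)+n) Q' \<and> F = quiver_form (m+n) n S' A' Q' Y"
proof (intro exI conjI)
  let ?N = "m + n"
  show "sym_matrix (?N+n) (refined_quad ?N m n m Q C)"
    using refined_quad_sym[OF assms(1,2)] by simp
  show "F = quiver_form ?N n (refined_lin ?N m n m S cs) (refined_lin ?N m n m A ca) (refined_quad ?N m n m Q C) Y"
  proof (intro ext)
    fix X' j h
    have "F Y j h = (\<Sum>d\<in>compositions ?N j. if (\<Sum>i<m. d i) \<le> h then
        quiver_weight ?N S A Q d * (qfact j / (\<Prod>i<?N. qfact (d i))) * g j (\<Sum>i<m. d i) h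
          * qbinom (\<Sum>i\<in>{m..<m+n}. d i) (h - (\<Sum>i<m. d i)) else 0)"
      unfolding target by (rule top_twist_sum) (simp add: quiver_form_eq_quiver_sum)
    also have "\<dots> = quiver_sum (?N+n) (m+n) (quiver_weight (?N+n) (refined_lin ?N m n m S cs)
        (refined_lin ?N m n m A ca) (refined_quad ?N m n m Q C)) j h"
      unfolding quiver_sum_refined[of m n ?N m, OF order_refl le_add1]
      by (intro sum.cong refl) (auto simp: g compositions_def simp del: of_nat_sum)
    finally show "F X' j h = quiver_form ?N n (refined_lin ?N m n m S cs) (refined_lin ?N m n m A ca)
        (refined_quad ?N m n m Q C) Y X' j h"
      using other by (cases "X' = Y") (simp_all add: quiver_form_eq_quiver_sum)
  qed
qed

text \<open>\<open>R\<close> keeps part of every active node active and moves the rest to a new inactive copy.\<close>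
lemma right_twist_quiver_form:
  assumes "sym_matrix (m+n) Q" and "\<forall>x y. C x y = C y x"
    and target: "\<And>j h. F Y j h = qbin j h * (if h \<le> j then
        (\<Sum>k\<in>{h..j}. (quiver_form m n S A Q X X j k / qbin j k) * g j k h * qbin (j - h) (k - h)) else 0)"
    and other: "\<And>X' j h. X' \<noteq> Y \<Longrightarrow> F X' j h = 0"
    and g: "\<And>j k h. stat_weight cs ca C (vec3 (int k) (int j) (int h)) = g j k h"
  shows "\<exists>S' A' Q'. sym_matrix (m+(n+m)) Q' \<and> F = quiver_form m (n+m) S' A' Q' Y"
proof (intro exI conjI)
  let ?N = "m + n"
  have size: "m + (n + m) = ?N + m" by simp
  have block: "0 + m \<le> ?N" by simp
  show "sym_matrix (m+(n+m)) (refined_quad ?N 0 m m Q C)"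
    unfolding size using refined_quad_sym[OF assms(1,2)] by simp
  show "F = quiver_form m (n+m) (refined_lin ?N 0 m m S cs) (refined_lin ?N 0 m m A ca) (refined_quad ?N 0 m m Q C) Y"
  proof (intro ext)
    fix X' j h
    have "F Y j h = (\<Sum>d\<in>compositions ?N j. quiver_weight ?N S A Q d * (qfact j / (\<Prod>i<?N. qfact (d i)))
        * g j (\<Sum>i<m. d i) h * qbinom (\<Sum>i<m. d i) h)"
      unfolding target by (rule right_twist_sum) (simp add: quiver_form_eq_quiver_sum)
    also have "\<dots> = quiver_sum (?N+m) m (quiver_weight (?N+m) (refined_lin ?N 0 m m S cs)
        (refined_lin ?N 0 m m A ca) (refined_quad ?N 0 m m Q C)) j h"
      unfolding quiver_sum_refined[OF block le_add1, unfolded add_0]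
      by (intro sum.cong refl) (auto simp: g compositions_def atLeast0LessThan simp del: of_nat_sum)
    finally show "F X' j h = quiver_form m (n+m) (refined_lin ?N 0 m m S cs) (refined_lin ?N 0 m m A ca)
        (refined_quad ?N 0 m m Q C) Y X' j h"
      using other by (cases "X' = Y") (simp_all add: quiver_form_eq_quiver_sum size)
  qed
qed

lemma Tt_quiver_form:
  assumes "sym_matrix (m+n) Q"
  shows "\<exists>S' A' Q' Y. sym_matrix ((m+n)+n) Q' \<and> Tt (quiver_form m n S A Q X) = quiver_form (m+n) n S' A' Q' Y"
proof -
  have "\<exists>S' A' Q'. sym_matrix ((m+n)+n) Q' \<and> Tt (quiver_form m n S A Q X) = quiver_form (m+n) n S' A' Q'
      (case X of UP \<Rightarrow> UP | OP \<Rightarrow> RI | RI \<Rightarrow> OP)"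
  proof (cases X)
    case UP
    show ?thesis unfolding UP
      by (rule top_twist_quiver_form[where S = S and A = A and cs = "vec3 0 (-1) 1" and ca = "vec3 0 0 0"
          and C = "sym3 1 0 0 0 0 0" and g = "\<lambda>j k h. (- qv) powi (int h - int j) * qv powi (int k ^ 2)", OF assms sym3_sym])
        (simp_all add: Tt_def rho_def rho_inv_def Ttw_def quiver_form_def stat_weight_vec3_sym3 mult.assoc
          split: orient.split)
  next
    case OP
    show ?thesis unfolding OP
      by (rule top_twist_quiver_form[where S = S and A = A and cs = "vec3 0 0 1" and ca = "vec3 1 0 0"
          and C = "sym3 1 0 0 (-1) 0 0"
          and g = "\<lambda>j k h. (- qv) powi int h * av powi int k * qv powi (int k ^ 2 - 2 * int j * int k)", OF assms sym3_sym])
        (simp_all add: Tt_def rho_def rho_inv_def Ttw_def quiver_form_def stat_weight_vec3_sym3 mult.assoc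
          algebra_simps split: orient.split)
  next
    case RI
    show ?thesis unfolding RI
      by (rule top_twist_quiver_form[where S = S and A = A and cs = "vec3 0 0 1" and ca = "vec3 0 0 1"
          and C = "sym3 1 0 0 0 0 (-1)"
          and g = "\<lambda>j k h. (- qv) powi int h * av powi int h * qv powi (int k ^ 2 - 2 * int j * int h)", OF assms sym3_sym])
        (simp_all add: Tt_def rho_def rho_inv_def Ttw_def quiver_form_def stat_weight_vec3_sym3 mult.assoc
          algebra_simps split: orient.split)
  qed
  then show ?thesis by blast
qed

lemma Rt_quiver_form:
  assumes "sym_matrix (m+n) Q"
  shows "\<exists>S' A' Q' Y. sym_matrix (m+(n+m)) Q' \<and> Rt (quiver_form m n S A Q X) = quiver_form m (n+m) S' A' Q' Y"
proof -
  have "\<exists>S' A' Q'. sym_matrix (m+(n+m)) Q' \<and> Rt (quiver_form m n S A Q X) = quiver_form m (n+m) S' A' Q'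
      (case X of UP \<Rightarrow> OP | OP \<Rightarrow> UP | RI \<Rightarrow> RI)"
  proof (cases X)
    case UP
    show ?thesis unfolding UP
      by (rule right_twist_quiver_form[where S = S and A = A and cs = "vec3 0 (-1) 1" and ca = "vec3 0 (-1) 1"
          and C = "sym3 1 1 0 0 (-1) 0"
          and g = "\<lambda>j k h. (- qv) powi (int h - int j) * av powi (int h - int j)
                    * qv powi (- 2 * int k * int h + int k ^ 2 + int j ^ 2)", OF assms sym3_sym])
        (simp_all add: Rt_def rho_def rho_inv_def Rtw_def quiver_form_def stat_weight_vec3_sym3 mult.assoc
          algebra_simps split: orient.split)
  next
    case OP
    show ?thesis unfolding OP
      by (rule right_twist_quiver_form[where S = S and A = A and cs = "vec3 0 (-1) 1" and ca = "vec3 1 (-1) 0"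
          and C = "sym3 1 1 0 (-1) (-1) 1"
          and g = "\<lambda>j k h. (- qv) powi (int h - int j) * av powi (int k - int j)
                    * qv powi (2 * int h * (int j - int k) + (int k - int j) ^ 2)", OF assms sym3_sym])
        (simp_all add: Rt_def rho_def rho_inv_def Rtw_def quiver_form_def stat_weight_vec3_sym3 mult.assoc
          algebra_simps power2_eq_square split: orient.split)
  next
    case RI
    show ?thesis unfolding RI
      by (rule right_twist_quiver_form[where S = S and A = A and cs = "vec3 0 0 1" and ca = "vec3 0 0 0"
          and C = "sym3 1 (-1) 0 0 (-1) 1"
          and g = "\<lambda>j k h. (- qv) powi int h * qv powi (int h * (2 * int j - 2 * int k) + int k ^ 2 - int j ^ 2)", OF assms sym3_sym])
        (simp_all add: Rt_def rho_def rho_inv_def Rtw_def quiver_form_def stat_weight_vec3_sym3 mult.assoc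
          algebra_simps power2_eq_square split: orient.split)
  qed
  then show ?thesis by blast
qed

lemma letter_op_quiver_form:
  assumes "sym_matrix (m+n) Q"
  shows "\<exists>m' n' S' A' Q' Y. sym_matrix (m'+n') Q' \<and> letter_op l (quiver_form m n S A Q X) = quiver_form m' n' S' A' Q' Y"
proof (cases l)
  case LT
  then show ?thesis using Tt_quiver_form[OF assms] by (simp add: letter_op_def) blast
next
  case LR
  then show ?thesis using Rt_quiver_form[OF assms] by (simp add: letter_op_def) blast
qed

lemma F0_quiver_form: "F0 = quiver_form 0 1 (\<lambda>_. 0) (\<lambda>_. 0) (\<lambda>_ _. 0) UP"
proof (intro ext)
  fix X and j k :: nat
  have "{d. (\<forall>i\<ge>Suc 0. d i = 0) \<and> d 0 = j \<and> k = 0} = (if k = 0 then {\<lambda>i. if i = 0 then j else 0} else {})"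
    by (auto simp: fun_eq_iff)
  then show "F0 X j k = quiver_form 0 1 (\<lambda>_. 0) (\<lambda>_. 0) (\<lambda>_ _. 0) UP X j k"
    using qfact_nonzero[of j] by (simp add: quiver_form_def F0_def)
qed

theorem mainTheorem6:
  fixes w :: "letter list"
  shows "\<exists>m n (S :: nat \<Rightarrow> int) (A :: nat \<Rightarrow> int) (Q :: nat \<Rightarrow> nat \<Rightarrow> int) X.
           (\<forall>i<m+n. \<forall>i'<m+n. Q i i' = Q i' i) \<and>
           word_op w F0 = quiver_form m n S A Q X"
proof (induction w)
  case Nil
  show ?case unfolding word_op_def using F0_quiver_form by (intro exI[of _ 0] exI[of _ 1]) auto
next
  case (Cons l w)
  then obtain m n S A Q X where "sym_matrix (m+n) Q" "word_op w F0 = quiver_form m n S A Q X"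
    by blast
  then show ?case using letter_op_quiver_form[of m n Q l S A X] by (simp add: word_op_def)
qed

end
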